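(* Let $r>0$ and $t\ge1$ be real numbers, and set $p=\lceil tr\rceil-\lceil r\rceil$ and $q=\lceil r\rceil-1$. Consider any nonincreasing sequence of nonnegative reals $$t-1,\ a_1,a_2,\dots,a_p,\ b_1,b_2,\dots,b_q$$ (of total length $\lceil tr\rceil$) in which $a_1,\dots,a_p$ is an arithmetic progression with common difference $-1/r$. If $t-1-a_1\le 1/r$ (a condition that is vacuous when $p=0$), then the average of the entire sequence is at least $\frac{t-2+1/t}{2}$. *)

theory Defs
  imports Complex_Main
begin

definition full_seq :: "real \<Rightarrow> (nat \<Rightarrow> real) \<Rightarrow> (nat \<Rightarrow> real) \<Rightarrow> nat \<Rightarrow> nat \<Rightarrow> real" where
  "full_seq t a b p i = (if i = 0 then t - 1 else if i \<le> p then a i else b (i - p))"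

end

theory Submission
  imports Defs
begin

text \<open>Only the first p + 1 terms matter: the b's contribute at least 0, and a_1 is bounded
  below both by t - 1 - 1/r and, since a_p \<ge> 0, by (p - 1)/r. With u = t - 1 and
  x = u r this gives 2 r S \<ge> x (x + 1) for the sum S, and since the length N = \<lceil>t r\<rceil>
  satisfies N u < (x + 1)(u + 1), dividing yields S/N \<ge> u^2/(2(u + 1)) = (t - 2 + 1/t)/2.\<close>

lemma ceiling_diff_gt:
  fixes x y :: real
  shows "x - y < real_of_int (\<lceil>x\<rceil> - \<lceil>y\<rceil>) + 1"
  by linarith

lemma sum_arith_progression:
  fixes A r :: real
  shows "(\<Sum>i = 1..n. A - (real i - 1) / r) = real n * A - real n * (real n - 1) / (2 * r)"
proof (induction n)
  case (Suc n)
  then show ?case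
    by (simp add: algebra_simps add_divide_distrib diff_divide_distrib)
qed simp

lemma arith_progression_closed_form:
  fixes a :: "nat \<Rightarrow> real"
  assumes step: "\<And>i. 1 \<le> i \<Longrightarrow> i < p \<Longrightarrow> a (Suc i) = a i - d"
    and "1 \<le> i" "i \<le> p"
  shows "a i = a 1 - (real i - 1) * d"
  using assms(2,3)
proof (induction i rule: dec_induct)
  case (step n)
  then show ?case
    using assms(1)[of n] by (simp add: algebra_simps)
qed simp

lemma quadratic_le_scaled_sum:
  fixes x \<alpha> :: real and p :: nat
  assumes "0 \<le> x" "x < real p + 1"
    and "1 \<le> p \<Longrightarrow> x - 1 \<le> \<alpha>" and "1 \<le> p \<Longrightarrow> real p - 1 \<le> \<alpha>"
  shows "x * (x + 1) \<le> 2 * x + 2 * real p * \<alpha> - real p * (real p - 1)"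
proof (cases "p = 0")
  case True
  then have "x * x \<le> 1 * x"
    using assms(1,2) by (intro mult_right_mono) auto
  then show ?thesis
    using True by (simp add: algebra_simps)
next
  case False
  then have "1 \<le> p" by simp
  show ?thesis
  proof (cases "real p \<le> x")
    case True
    have "real p * (x - 1) \<le> real p * \<alpha>"
      using assms(3) \<open>1 \<le> p\<close> by (simp add: mult_left_mono)
    moreover have "0 \<le> (x - real p) * (real p + 1 - x)"
      using True assms(2) by simp
    ultimately show ?thesis
      by (simp add: algebra_simps)
  next
    case False
    have "real p * (real p - 1) \<le> real p * \<alpha>"
      using assms(4) \<open>1 \<le> p\<close> by (simp add: mult_left_mono)
    moreover have "x * (x - 1) \<le> real p * (real p - 1)"
    proof (cases "x \<le> 1")
      case True
      then have "x * (x - 1) \<le> 0" using assms(1) by (simp add: mult_nonneg_nonpos)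
      moreover have "0 \<le> real p * (real p - 1)" using \<open>1 \<le> p\<close> by simp
      ultimately show ?thesis by linarith
    next
      case False
      then show ?thesis using \<open>\<not> real p \<le> x\<close> by (intro mult_mono) auto
    qed
    ultimately show ?thesis
      by (simp add: algebra_simps)
  qed
qed

lemma average_ge_from_scaled_sum:
  fixes u r S :: real and N :: nat
  assumes "0 \<le> u" "0 < r" "0 < N" "real N < (u + 1) * r + 1"
    and scaled: "u * r * (u * r + 1) \<le> 2 * r * S"
  shows "u\<^sup>2 / (2 * (u + 1)) \<le> S / real N"
proof -
  have "real N * u \<le> ((u + 1) * r + 1) * u"
    using assms(1,4) by (simp add: mult_right_mono)
  also have "\<dots> \<le> (u * r + 1) * (u + 1)"
    using assms(1,2) by (simp add: algebra_simps)
  finally have "real N * u * (u * r) \<le> (u * r + 1) * (u + 1) * (u * r)"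
    using assms(1,2) by (simp add: mult_right_mono)
  also have "\<dots> = u * r * (u * r + 1) * (u + 1)"
    by (simp add: algebra_simps)
  also have "\<dots> \<le> 2 * r * S * (u + 1)"
    using scaled assms(1) by (intro mult_right_mono) auto
  finally have "r * (u\<^sup>2 * real N) \<le> r * (2 * (u + 1) * S)"
    by (simp add: power2_eq_square algebra_simps)
  then have "u\<^sup>2 * real N \<le> 2 * (u + 1) * S"
    using assms(2) by simp
  then show ?thesis
    using assms(1,3) by (simp add: field_simps)
qed

lemma sum_full_seq_ge:
  fixes r t :: real and a b :: "nat \<Rightarrow> real"
  assumes "0 < r"
    and nonneg: "\<forall>i \<le> p + q. full_seq t a b p i \<ge> 0"
    and arith: "\<forall>i. 1 \<le> i \<and> i < p \<longrightarrow> a (Suc i) = a i - 1 / r"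
  shows "t - 1 + real p * a 1 - real p * (real p - 1) / (2 * r)
           \<le> (\<Sum>i \<le> p + q. full_seq t a b p i)"
proof -
  have a_closed: "a i = a 1 - (real i - 1) / r" if "1 \<le> i" "i \<le> p" for i
    using arith_progression_closed_form[of p a "1 / r" i] arith that by simp
  have "(\<Sum>i \<le> p. full_seq t a b p i) = t - 1 + (\<Sum>i = 1..p. full_seq t a b p i)"
  proof -
    have "{..p} = insert 0 {1..p}" by auto
    then show ?thesis by (simp add: full_seq_def)
  qed
  also have "(\<Sum>i = 1..p. full_seq t a b p i) = (\<Sum>i = 1..p. a 1 - (real i - 1) / r)"
  proof (rule sum.cong)
    show "full_seq t a b p i = a 1 - (real i - 1) / r" if "i \<in> {1..p}" for i
      using that a_closed[of i] by (simp add: full_seq_def)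
  qed simp
  also have "\<dots> = real p * a 1 - real p * (real p - 1) / (2 * r)"
    by (rule sum_arith_progression)
  finally have "(\<Sum>i \<le> p. full_seq t a b p i) = t - 1 + real p * a 1 - real p * (real p - 1) / (2 * r)"
    by simp
  moreover have "(\<Sum>i \<le> p. full_seq t a b p i) \<le> (\<Sum>i \<le> p + q. full_seq t a b p i)"
    using nonneg by (intro sum_mono2) auto
  ultimately show ?thesis by simp
qed

theorem mainTheorem16:
  fixes r t :: real and a b :: "nat \<Rightarrow> real" and p q :: nat
  assumes r_pos: "r > 0" and t_ge: "t \<ge> 1"
    and p_def: "int p = \<lceil>t * r\<rceil> - \<lceil>r\<rceil>"
    and q_def: "int q = \<lceil>r\<rceil> - 1"
    and nonneg: "\<forall>i \<le> p + q. full_seq t a b p i \<ge> 0"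
    and noninc: "\<forall>i < p + q. full_seq t a b p (Suc i) \<le> full_seq t a b p i"
    and arith: "\<forall>i. 1 \<le> i \<and> i < p \<longrightarrow> a (Suc i) = a i - 1 / r"
    and first_gap: "p \<ge> 1 \<longrightarrow> t - 1 - a 1 \<le> 1 / r"
  shows "(\<Sum>i \<le> p + q. full_seq t a b p i) / real (p + q + 1) \<ge> (t - 2 + 1 / t) / 2"
proof -
  define u where "u = t - 1"
  define S where "S = (\<Sum>i \<le> p + q. full_seq t a b p i)"
  have "int (p + q + 1) = \<lceil>t * r\<rceil>"
    using p_def q_def by simp
  then have "real (p + q + 1) = real_of_int \<lceil>t * r\<rceil>"
    by (metis of_int_of_nat_eq)
  then have length_lt: "real (p + q + 1) < t * r + 1"
    by linarith
  have p_gt: "u * r < real p + 1"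
    using ceiling_diff_gt[of "t * r" r] p_def by (simp add: u_def algebra_simps)
  have first_bound: "u * r - 1 \<le> r * a 1" if "1 \<le> p"
  proof -
    have "u - 1 / r \<le> a 1"
      using first_gap that by (simp add: u_def)
    then show ?thesis
      using r_pos by (simp add: field_simps)
  qed
  have last_bound: "real p - 1 \<le> r * a 1" if "1 \<le> p"
  proof -
    have "0 \<le> a p"
      using nonneg that by (auto simp: full_seq_def dest: spec[of _ p])
    moreover have "a p = a 1 - (real p - 1) * (1 / r)"
      by (rule arith_progression_closed_form[of p a]) (use arith that in auto)
    ultimately show ?thesis
      using r_pos by (simp add: field_simps)
  qed
  have "u * r * (u * r + 1) \<le> 2 * (u * r) + 2 * real p * (r * a 1) - real p * (real p - 1)"
    using t_ge r_pos p_gt first_bound last_bound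
    by (intro quadratic_le_scaled_sum) (auto simp: u_def)
  also have "\<dots> = 2 * r * (t - 1 + real p * a 1 - real p * (real p - 1) / (2 * r))"
    using r_pos by (simp add: u_def field_simps)
  also have "\<dots> \<le> 2 * r * S"
    using sum_full_seq_ge[OF r_pos nonneg arith] r_pos by (simp add: S_def)
  finally have "u\<^sup>2 / (2 * (u + 1)) \<le> S / real (p + q + 1)"
    using t_ge r_pos length_lt by (intro average_ge_from_scaled_sum) (auto simp: u_def)
  moreover have "(t - 2 + 1 / t) / 2 = u\<^sup>2 / (2 * (u + 1))"
    using t_ge by (simp add: u_def field_simps power2_eq_square)
  ultimately show ?thesis
    unfolding S_def by (simp only:)
qed

end
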